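(* Let $G^*=(V^*,E^* )$ be a weakly connected digraph, let $v_0\in V^*$, and let $L_0,\dots,L_\ell$ be the layers defined below; set $L_{\ell+1}=\emptyset$. Then for every directed path $Q$ in $G^*$ there exists $j\in\{0,\dots,\ell\}$ such that all vertices of $Q$ lie in $L_j\cup L_{j+1}$. In particular, if $G^*$ contains an $s$-$t$ dipath, then for some $j$ the subgraph induced by $L_j\cup L_{j+1}$ contains an $s$-$t$ dipath.
   Context: Layers: $L_0$ is the set of vertices of $V^*$ reachable from $v_0$ in $G^*$. For $j\ge1$: if $j$ is odd, $L_j$ is the set of vertices $v\in V^*\setminus\bigcup_{j'<j}L_{j'}$ that can reach some vertex of $L_{j-1}$ in $G^*$; if $j$ is even, $L_j$ is the set of vertices $v\in V^*\setminus\bigcup_{j'<j}L_{j'}$ reachable from some vertex of $L_{j-1}$ in $G^*$. The process continues until all vertices are covered; $\ell$ is the index of the last layer. *)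

theory Defs
  imports Main
begin

definition weakly_connected :: "'a set \<Rightarrow> ('a \<times> 'a) set \<Rightarrow> bool" where
  "weakly_connected V E \<longleftrightarrow> V \<noteq> {} \<and> (\<forall>u\<in>V. \<forall>v\<in>V. (u, v) \<in> (E \<union> E\<inverse>)\<^sup>*)"

definition dipath :: "'a set \<Rightarrow> ('a \<times> 'a) set \<Rightarrow> 'a list \<Rightarrow> bool" where
  "dipath V E Q \<longleftrightarrow> Q \<noteq> [] \<and> distinct Q \<and> set Q \<subseteq> V \<and>
     (\<forall>i. Suc i < length Q \<longrightarrow> (Q ! i, Q ! Suc i) \<in> E)"

text \<open>Layer construction: lay j = (L_j, L_0 \<union> ... \<union> L_j).\<close>
primrec lay :: "'a set \<Rightarrow> ('a \<times> 'a) set \<Rightarrow> 'a \<Rightarrow> nat \<Rightarrow> 'a set \<times> 'a set" where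
  "lay V E v0 0 = ({v \<in> V. (v0, v) \<in> E\<^sup>*}, {v \<in> V. (v0, v) \<in> E\<^sup>*})"
| "lay V E v0 (Suc j) =
     (let L = fst (lay V E v0 j); C = snd (lay V E v0 j);
          L' = {v \<in> V - C. if odd (Suc j) then (\<exists>u\<in>L. (v, u) \<in> E\<^sup>*)
                              else (\<exists>u\<in>L. (u, v) \<in> E\<^sup>*)}
      in (L', C \<union> L'))"

definition layer :: "'a set \<Rightarrow> ('a \<times> 'a) set \<Rightarrow> 'a \<Rightarrow> nat \<Rightarrow> 'a set" where
  "layer V E v0 j = fst (lay V E v0 j)"

definition last_layer :: "'a set \<Rightarrow> ('a \<times> 'a) set \<Rightarrow> 'a \<Rightarrow> nat" where
  "last_layer V E v0 = (LEAST l. (\<Union>i\<le>l. layer V E v0 i) = V)"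

definition layer_ext :: "'a set \<Rightarrow> ('a \<times> 'a) set \<Rightarrow> 'a \<Rightarrow> nat \<Rightarrow> 'a set" where
  "layer_ext V E v0 j = (if j \<le> last_layer V E v0 then layer V E v0 j else {})"

end

theory Submission
  imports Defs
begin

text \<open>Even layers are closed forwards and odd layers backwards (apart from vertices already
  placed), and a vertex joined to layer \<open>m\<close> in the other direction belongs to layer \<open>m + 1\<close>.
  Hence a vertex comparable under \<open>E\<^sup>*\<close> with a vertex of \<open>L\<^sub>m\<close> but outside all
  earlier layers lies in \<open>L\<^sub>m \<union> L\<^sub>m\<^sub>+\<^sub>1\<close>. Applied to a vertex of a dipath in the
  lowest layer that the path meets, this gives the theorem, since any two vertices of a dipath
  are comparable. Applied to an arc leaving the first \<open>j + 1\<close> layers, which exists by weak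
  connectivity, it shows that layer \<open>j + 1\<close> is nonempty until all vertices are covered.\<close>

lemma snd_lay: "snd (lay V E v0 j) = (\<Union>i\<le>j. layer V E v0 i)"
  by (induction j) (auto simp: Let_def layer_def atMost_Suc)

lemma layer_0: "layer V E v0 0 = {v \<in> V. (v0, v) \<in> E\<^sup>*}"
  by (simp add: layer_def)

lemma layer_Suc: "layer V E v0 (Suc j) = {v \<in> V - (\<Union>i<Suc j. layer V E v0 i).
   if even j then \<exists>u\<in>layer V E v0 j. (v, u) \<in> E\<^sup>*
   else \<exists>u\<in>layer V E v0 j. (u, v) \<in> E\<^sup>*}"
  by (simp add: layer_def Let_def snd_lay[unfolded layer_def] lessThan_Suc_atMost)

lemma layer_subset: "layer V E v0 j \<subseteq> V"
  by (cases j) (auto simp: layer_0 layer_Suc)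

lemma layer_disjoint: "i < j \<Longrightarrow> v \<in> layer V E v0 i \<Longrightarrow> v \<notin> layer V E v0 j"
  by (cases j) (auto simp: layer_Suc)

lemma layer_unique: "v \<in> layer V E v0 i \<Longrightarrow> v \<in> layer V E v0 j \<Longrightarrow> i = j"
  by (metis layer_disjoint linorder_neqE_nat)

lemma layer_even_reach_closed:
  assumes "even m" "x \<in> layer V E v0 m" "(x, y) \<in> E\<^sup>*" "y \<in> V" "y \<notin> (\<Union>i<m. layer V E v0 i)"
  shows "y \<in> layer V E v0 m"
proof (cases m)
  case 0
  then show ?thesis using assms by (auto simp: layer_0 intro: rtrancl_trans)
next
  case (Suc k)
  then show ?thesis using assms by (auto simp: layer_Suc intro: rtrancl_trans)
qed

lemma layer_odd_reach_closed:
  assumes "odd m" "x \<in> layer V E v0 m" "(y, x) \<in> E\<^sup>*" "y \<in> V" "y \<notin> (\<Union>i<m. layer V E v0 i)"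
  shows "y \<in> layer V E v0 m"
proof -
  obtain k where "m = Suc k" using \<open>odd m\<close> by (cases m) auto
  then show ?thesis using assms by (auto simp: layer_Suc intro: rtrancl_trans)
qed

lemma comparable_layer:
  assumes "x \<in> layer V E v0 m" "y \<in> V" "y \<notin> (\<Union>i<m. layer V E v0 i)"
    and "(x, y) \<in> E\<^sup>* \<or> (y, x) \<in> E\<^sup>*"
  shows "y \<in> layer V E v0 m \<union> layer V E v0 (Suc m)"
proof (cases "even m")
  case True
  show ?thesis
    using assms layer_even_reach_closed[OF True assms(1) _ assms(2,3)]
    by (auto simp: layer_Suc True lessThan_Suc)
next
  case False
  then have "odd m" by simp
  show ?thesis
    using assms layer_odd_reach_closed[OF \<open>odd m\<close> assms(1) _ assms(2,3)]
    by (auto simp: layer_Suc False lessThan_Suc)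
qed

lemma rtrancl_exits_set:
  "(x, y) \<in> R\<^sup>* \<Longrightarrow> x \<in> S \<Longrightarrow> y \<notin> S \<Longrightarrow> \<exists>a b. (a, b) \<in> R \<and> a \<in> S \<and> b \<notin> S"
  by (induction rule: rtrancl_induct) auto

lemma layer_Suc_nonempty:
  assumes "E \<subseteq> V \<times> V" "weakly_connected V E" "v0 \<in> V"
    and "(\<Union>i\<le>j. layer V E v0 i) \<noteq> V"
  shows "layer V E v0 (Suc j) \<noteq> {}"
proof -
  let ?C = "\<Union>i\<le>j. layer V E v0 i"
  have "?C \<subseteq> V" using layer_subset[of V E v0] by blast
  then obtain w where w: "w \<in> V" "w \<notin> ?C" using assms(4) by blast
  have "v0 \<in> layer V E v0 0" using assms(3) by (simp add: layer_0)
  then have "v0 \<in> ?C" by blast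
  have "(v0, w) \<in> (E \<union> E\<inverse>)\<^sup>*"
    using assms(2,3) w(1) by (auto simp: weakly_connected_def)
  from rtrancl_exits_set[OF this \<open>v0 \<in> ?C\<close> w(2)]
  obtain a b where ab: "(a, b) \<in> E \<union> E\<inverse>" "a \<in> ?C" "b \<notin> ?C" by blast
  then obtain i where i: "i \<le> j" "a \<in> layer V E v0 i" by blast
  have "b \<in> V" using ab(1) assms(1) by blast
  moreover have "b \<notin> (\<Union>k<i. layer V E v0 k)" using ab(3) i(1) by auto
  moreover have "(a, b) \<in> E\<^sup>* \<or> (b, a) \<in> E\<^sup>*" using ab(1) by blast
  ultimately have "b \<in> layer V E v0 i \<union> layer V E v0 (Suc i)"
    by (rule comparable_layer[OF i(2)])
  then have "b \<in> layer V E v0 (Suc i)" and "\<not> Suc i \<le> j"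
    using ab(3) i(1) by auto
  moreover have "i = j" using i(1) \<open>\<not> Suc i \<le> j\<close> by simp
  ultimately show ?thesis by blast
qed

lemma card_layers_gt:
  assumes "finite V" "E \<subseteq> V \<times> V" "weakly_connected V E" "v0 \<in> V"
    and "(\<Union>i\<le>j. layer V E v0 i) \<noteq> V"
  shows "j < card (\<Union>i\<le>j. layer V E v0 i)"
  using assms(5)
proof (induction j)
  case 0
  have "v0 \<in> layer V E v0 0" using assms(4) by (simp add: layer_0)
  moreover have "finite (layer V E v0 0)" using finite_subset[OF layer_subset assms(1)] .
  ultimately show ?case by (auto simp: card_gt_0_iff)
next
  case (Suc j)
  let ?C = "\<Union>i\<le>j. layer V E v0 i"
  let ?L = "layer V E v0 (Suc j)"
  have union_Suc: "(\<Union>i\<le>Suc j. layer V E v0 i) = ?C \<union> ?L"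
    by (simp add: atMost_Suc Un_commute)
  have "?C \<union> ?L \<subseteq> V" using layer_subset[of V E v0] by blast
  then have "finite (?C \<union> ?L)" using assms(1) by (rule finite_subset)
  have "?C \<noteq> V" using Suc.prems \<open>?C \<union> ?L \<subseteq> V\<close> unfolding union_Suc by blast
  then have "j < card ?C" by (rule Suc.IH)
  have "?L \<noteq> {}" using layer_Suc_nonempty[OF assms(2-4) \<open>?C \<noteq> V\<close>] .
  moreover have "?L \<inter> ?C = {}" by (auto simp: layer_Suc lessThan_Suc_atMost)
  ultimately have "?C \<subset> ?C \<union> ?L" by blast
  with \<open>finite (?C \<union> ?L)\<close> have "card ?C < card (?C \<union> ?L)" by (rule psubset_card_mono)
  then show ?case using \<open>j < card ?C\<close> unfolding union_Suc by simp
qed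

lemma layers_cover:
  assumes "finite V" "E \<subseteq> V \<times> V" "weakly_connected V E" "v0 \<in> V"
  shows "(\<Union>i\<le>last_layer V E v0. layer V E v0 i) = V"
proof -
  have "(\<Union>i\<le>card V. layer V E v0 i) \<subseteq> V" using layer_subset[of V E v0] by blast
  with assms(1) have "card (\<Union>i\<le>card V. layer V E v0 i) \<le> card V" by (rule card_mono)
  then have "(\<Union>i\<le>card V. layer V E v0 i) = V"
    using card_layers_gt[OF assms, of "card V"] by linarith
  then show ?thesis unfolding last_layer_def by (rule LeastI)
qed

lemma layer_le_last_layer:
  assumes "finite V" "E \<subseteq> V \<times> V" "weakly_connected V E" "v0 \<in> V"
    and "v \<in> layer V E v0 i"
  shows "i \<le> last_layer V E v0"
proof -
  have "v \<in> V" using layer_subset assms(5) by (rule subsetD)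
  then obtain k where "k \<le> last_layer V E v0" "v \<in> layer V E v0 k"
    using layers_cover[OF assms(1-4)] by blast
  then show ?thesis using layer_unique[OF assms(5)] by simp
qed

lemma dipath_nth_reach:
  assumes "dipath V E Q" "i \<le> k" "k < length Q"
  shows "(Q ! i, Q ! k) \<in> E\<^sup>*"
  using assms(2,3)
proof (induction k)
  case (Suc k)
  then show ?case
    using assms(1) by (cases "i = Suc k") (auto simp: dipath_def intro: rtrancl_into_rtrancl)
qed simp

lemma dipath_comparable:
  assumes "dipath V E Q" "x \<in> set Q" "y \<in> set Q"
  shows "(x, y) \<in> E\<^sup>* \<or> (y, x) \<in> E\<^sup>*"
  using assms dipath_nth_reach[OF assms(1)] by (metis in_set_conv_nth nat_le_linear)

lemma dipath_induced:
  assumes "dipath V E Q" "set Q \<subseteq> S"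
  shows "dipath S (E \<inter> S \<times> S) Q"
  using assms by (auto simp: dipath_def)

lemma dipath_in_two_layers:
  assumes "finite V" "E \<subseteq> V \<times> V" "weakly_connected V E" "v0 \<in> V"
    and Q: "dipath V E Q"
  shows "\<exists>j\<le>last_layer V E v0. set Q \<subseteq> layer_ext V E v0 j \<union> layer_ext V E v0 (Suc j)"
proof -
  have "set Q \<subseteq> V" "hd Q \<in> set Q" using Q by (auto simp: dipath_def)
  then have "hd Q \<in> (\<Union>i\<le>last_layer V E v0. layer V E v0 i)"
    using layers_cover[OF assms(1-4)] by auto
  then have "\<exists>i. \<exists>v\<in>set Q. v \<in> layer V E v0 i"
    using \<open>hd Q \<in> set Q\<close> by blast
  then obtain m where "\<exists>x\<in>set Q. x \<in> layer V E v0 m"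
    and m_min: "\<forall>i<m. \<not> (\<exists>y\<in>set Q. y \<in> layer V E v0 i)"
    unfolding exists_least_iff[where P = "\<lambda>i. \<exists>v\<in>set Q. v \<in> layer V E v0 i"] by blast
  then obtain x where x: "x \<in> set Q" "x \<in> layer V E v0 m" by blast
  have "set Q \<subseteq> layer V E v0 m \<union> layer V E v0 (Suc m)"
    using comparable_layer[OF x(2)] dipath_comparable[OF Q x(1)] m_min \<open>set Q \<subseteq> V\<close> by blast
  moreover have "m \<le> last_layer V E v0" using layer_le_last_layer[OF assms(1-4) x(2)] .
  ultimately have "set Q \<subseteq> layer_ext V E v0 m \<union> layer_ext V E v0 (Suc m)"
    using layer_le_last_layer[OF assms(1-4)] by (auto simp: layer_ext_def)
  then show ?thesis using \<open>m \<le> last_layer V E v0\<close> by blast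
qed

theorem mainTheorem8:
  fixes V :: "'a set" and E :: "('a \<times> 'a) set" and v0 :: 'a
  assumes "finite V" and "E \<subseteq> V \<times> V" and "weakly_connected V E" and "v0 \<in> V"
  shows "(\<forall>Q. dipath V E Q \<longrightarrow>
            (\<exists>j\<le>last_layer V E v0.
               set Q \<subseteq> layer_ext V E v0 j \<union> layer_ext V E v0 (Suc j)))
       \<and> (\<forall>s t. (\<exists>Q. dipath V E Q \<and> hd Q = s \<and> last Q = t) \<longrightarrow>
            (\<exists>j\<le>last_layer V E v0.
               let S = layer_ext V E v0 j \<union> layer_ext V E v0 (Suc j) in
               \<exists>Q. dipath S (E \<inter> S \<times> S) Q \<and> hd Q = s \<and> last Q = t))"
proof (intro conjI allI impI)
  fix Q assume "dipath V E Q"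
  then show "\<exists>j\<le>last_layer V E v0. set Q \<subseteq> layer_ext V E v0 j \<union> layer_ext V E v0 (Suc j)"
    by (rule dipath_in_two_layers[OF assms])
next
  fix s t assume "\<exists>Q. dipath V E Q \<and> hd Q = s \<and> last Q = t"
  then obtain Q where Q: "dipath V E Q" "hd Q = s" "last Q = t" by blast
  then obtain j where "j \<le> last_layer V E v0"
    and "set Q \<subseteq> layer_ext V E v0 j \<union> layer_ext V E v0 (Suc j)"
    using dipath_in_two_layers[OF assms] by blast
  then show "\<exists>j\<le>last_layer V E v0.
               let S = layer_ext V E v0 j \<union> layer_ext V E v0 (Suc j) in
               \<exists>Q. dipath S (E \<inter> S \<times> S) Q \<and> hd Q = s \<and> last Q = t"
    using Q dipath_induced unfolding Let_def by blast
qed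

end
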